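(* Let $n\in\mathbb{N}_0$ and let $\mu$ be a positive Borel measure on $\mathbb{C}$ which is a sampling measure for the short-time Fourier transform with window $h_n$ and sampling bounds $A,B>0$, i.e. $$A\|f\|_2^2\le\int_{\mathbb{C}}|V_{h_n}f(z)|^2\,d\mu(z)\le B\|f\|_2^2\quad\text{for all } f\in L^2(\mathbb{R}).$$ If $R>0$ and $\mu(\mathbb{D}_R(z))=0$ for some $z\in\mathbb{C}$, then $$R^2\le\frac{2}{\pi}\log\left(4^n\cdot 5\,\frac{B}{A}\right).$$
   Context: For $z=x+i\xi\in\mathbb{C}$ and $g\in L^2(\mathbb{R})$, $\pi(z)g(t)=e^{2\pi i\xi t}g(t-x)$, and the short-time Fourier transform of $f\in L^2(\mathbb{R})$ with window $g$ is $V_gf(z)=\langle f,\pi(z)g\rangle$. The Hermite functions are $h_n(t)=c_n e^{\pi t^2}\frac{d^n}{dt^n}e^{-2\pi t^2}$, $n\in\mathbb{N}_0$, with $c_n>0$ chosen so that $\|h_n\|_2=1$. $\mathbb{D}_R(z)$ denotes the open Euclidean disk of radius $R$ centered at $z$. *)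

theory Defs
  imports "HOL-Analysis.Analysis"
begin

definition L2 :: "(real \<Rightarrow> complex) set" where
  "L2 = {f. f \<in> borel_measurable lborel \<and> integrable lborel (\<lambda>t. (cmod (f t))^2)}"

definition L2_norm_sq :: "(real \<Rightarrow> complex) \<Rightarrow> real" where
  "L2_norm_sq f = (\<integral>t. (cmod (f t))^2 \<partial>lborel)"

definition tf_shift :: "complex \<Rightarrow> (real \<Rightarrow> complex) \<Rightarrow> real \<Rightarrow> complex" where
  "tf_shift z g t = exp (2 * pi * \<i> * of_real (Im z * t)) * g (t - Re z)"

definition L2_inner :: "(real \<Rightarrow> complex) \<Rightarrow> (real \<Rightarrow> complex) \<Rightarrow> complex" where
  "L2_inner f g = (\<integral>t. f t * cnj (g t) \<partial>lborel)"

definition stft :: "(real \<Rightarrow> complex) \<Rightarrow> (real \<Rightarrow> complex) \<Rightarrow> complex \<Rightarrow> complex" where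
  "stft g f z = L2_inner f (tf_shift z g)"

definition hermite_raw :: "nat \<Rightarrow> real \<Rightarrow> real" where
  "hermite_raw n t = exp (pi * t^2) * (deriv ^^ n) (\<lambda>s. exp (- 2 * pi * s^2)) t"

definition hermite_fun :: "nat \<Rightarrow> real \<Rightarrow> complex" where
  "hermite_fun n t = of_real (hermite_raw n t / sqrt (\<integral>s. (hermite_raw n s)^2 \<partial>lborel))"

end

theory Submission
  imports Defs "HOL-Probability.Probability" "HOL-Computational_Algebra.Polynomial"
    "HOL-Real_Asymp.Real_Asymp"
begin

(*
  Test the sampling inequality with the time-frequency shifts pi(w) phi of the Gaussian
  phi(t) = exp(-pi t^2). As h_n is a polynomial times exp(-pi t^2), n integrations by parts
  reduce V_{h_n} pi(w) phi to the Fourier transform of a Gaussian, and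
  |V_{h_n} pi(w) phi (zeta)|^2 = kappa |zeta - w|^(2n) exp(-pi |zeta - w|^2).
  Every zeta outside the hole D_R(z) makes an angle of cosine at least 3/4 with one of five
  fixed unit vectors e, and then the weight at zeta for the centre z is at most
  4^n exp(-pi R^2 / 2) times the weight for the centre z + (R/2) e. Integrating against mu,
  the lower sampling bound at z is at most 4^n exp(-pi R^2 / 2) times five upper sampling bounds.
*)

section \<open>Derivatives of the Gaussian\<close>

primrec hermite_poly :: "nat \<Rightarrow> real poly" where
  "hermite_poly 0 = 1"
| "hermite_poly (Suc k) = pderiv (hermite_poly k) + [:0, -4*pi:] * hermite_poly k"

lemma has_real_derivative_poly_gauss:
  "((\<lambda>s. poly P s * exp (- 2 * pi * s^2)) has_real_derivative
     poly (pderiv P + [:0, -4*pi:] * P) s * exp (- 2 * pi * s^2)) (at s)"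
  by (auto intro!: derivative_eq_intros poly_DERIV simp: algebra_simps)

lemma higher_deriv_gauss:
  "(deriv ^^ k) (\<lambda>s. exp (- 2 * pi * s^2)) = (\<lambda>s. poly (hermite_poly k) s * exp (- 2 * pi * s^2))"
proof (induction k)
  case 0
  then show ?case by simp
next
  case (Suc k)
  have "(deriv ^^ Suc k) (\<lambda>s. exp (- 2 * pi * s^2)) =
      deriv (\<lambda>s. poly (hermite_poly k) s * exp (- 2 * pi * s^2))"
    by (simp only: funpow.simps o_def Suc)
  also have "\<dots> = (\<lambda>s. poly (hermite_poly (Suc k)) s * exp (- 2 * pi * s^2))"
    by (rule ext, simp only: hermite_poly.simps, rule DERIV_imp_deriv[OF has_real_derivative_poly_gauss])
  finally show ?case .
qed

lemma hermite_raw_eq_poly: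
  "hermite_raw n t = exp (pi * t^2) * (poly (hermite_poly n) t * exp (- 2 * pi * t^2))"
  unfolding hermite_raw_def higher_deriv_gauss by simp

section \<open>Gaussian integrals with polynomial and exponential factors\<close>

lemma power_le_fact_mult_exp:
  assumes "0 \<le> (x::real)"
  shows "x^i \<le> fact i * exp x"
proof -
  have "(\<Sum>k\<in>{i}. x^k / fact k) \<le> (\<Sum>k. x^k / fact k)"
    using summable_exp[of x] assms by (intro sum_le_suminf) (auto simp: field_simps)
  then have "x^i / fact i \<le> exp x"
    by (simp add: exp_def field_simps)
  then show ?thesis
    by (simp add: divide_le_eq mult.commute)
qed

lemma poly_bounded_by_exp: "\<exists>C\<ge>0. \<forall>s::real. \<bar>poly P s\<bar> \<le> C * exp \<bar>s\<bar>"
proof (intro exI[of _ "\<Sum>i\<le>degree P. \<bar>coeff P i\<bar> * fact i"] conjI allI)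
  show "0 \<le> (\<Sum>i\<le>degree P. \<bar>coeff P i\<bar> * fact i)"
    by (intro sum_nonneg) auto
  fix s :: real
  have "\<bar>poly P s\<bar> \<le> (\<Sum>i\<le>degree P. \<bar>coeff P i * s ^ i\<bar>)"
    unfolding poly_altdef by (rule sum_abs)
  also have "\<dots> \<le> (\<Sum>i\<le>degree P. \<bar>coeff P i\<bar> * fact i * exp \<bar>s\<bar>)"
  proof (intro sum_mono)
    fix i
    have "\<bar>s\<bar>^i \<le> fact i * exp \<bar>s\<bar>"
      by (rule power_le_fact_mult_exp) auto
    then show "\<bar>coeff P i * s ^ i\<bar> \<le> \<bar>coeff P i\<bar> * fact i * exp \<bar>s\<bar>"
      by (simp add: abs_mult power_abs mult.assoc mult_left_mono)
  qed
  finally show "\<bar>poly P s\<bar> \<le> (\<Sum>i\<le>degree P. \<bar>coeff P i\<bar> * fact i) * exp \<bar>s\<bar>"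
    by (simp add: sum_distrib_right)
qed

lemma exponent_le_half_gauss:
  fixes s \<beta> :: real
  shows "\<bar>s\<bar> + (- 2 * pi * s^2) + \<beta> * s \<le> (1 + \<bar>\<beta>\<bar>)^2 + (- (s^2) / 2)"
proof -
  have "\<beta> * s \<le> \<bar>\<beta>\<bar> * \<bar>s\<bar>"
    by (metis abs_ge_self abs_mult)
  moreover have "\<bar>s\<bar> + \<bar>\<beta>\<bar> * \<bar>s\<bar> \<le> (1 + \<bar>\<beta>\<bar>)^2 + s^2 / 4"
  proof -
    have "0 \<le> ((1 + \<bar>\<beta>\<bar>) - \<bar>s\<bar> / 2)^2"
      by simp
    also have "\<dots> = (1 + \<bar>\<beta>\<bar>)^2 + s^2 / 4 - (\<bar>s\<bar> + \<bar>\<beta>\<bar> * \<bar>s\<bar>)"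
      by (simp add: power2_eq_square algebra_simps)
    finally show ?thesis by linarith
  qed
  moreover have "3 * s^2 \<le> pi * s^2"
    using pi_gt3 by (intro mult_right_mono) auto
  ultimately show ?thesis
    using zero_le_power2[of s] by linarith
qed

lemma integrable_exp_minus_sq_half: "integrable lborel (\<lambda>s::real. exp (- (s^2) / 2))"
proof -
  have "integrable lborel (\<lambda>s. sqrt (2 * pi) * std_normal_density s)"
    by (intro integrable_mult_right) simp
  then show ?thesis
    by (simp add: std_normal_density_def)
qed

definition poly_gauss_exp :: "real poly \<Rightarrow> complex \<Rightarrow> real \<Rightarrow> complex" where
  "poly_gauss_exp P c s =
     complex_of_real (poly P s * exp (- 2 * pi * s^2)) * exp (of_real s * (2 * of_real pi * c))"

lemma norm_poly_gauss_exp_le: "\<exists>C. \<forall>s. norm (poly_gauss_exp P c s) \<le> C * exp (- (s^2) / 2)"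
proof -
  obtain C where C: "C \<ge> 0" "\<And>s. \<bar>poly P s\<bar> \<le> C * exp \<bar>s\<bar>"
    using poly_bounded_by_exp by blast
  define \<beta> where "\<beta> = 2 * pi * Re c"
  show ?thesis
  proof (intro exI[of _ "C * exp ((1 + \<bar>\<beta>\<bar>)^2)"] allI)
    fix s :: real
    have "norm (poly_gauss_exp P c s) = \<bar>poly P s\<bar> * exp (- 2 * pi * s^2) * exp (\<beta> * s)"
      by (simp add: poly_gauss_exp_def norm_mult abs_mult \<beta>_def mult_ac)
    also have "\<dots> \<le> C * exp \<bar>s\<bar> * exp (- 2 * pi * s^2) * exp (\<beta> * s)"
      using C(2)[of s] by (intro mult_right_mono) auto
    also have "\<dots> = C * exp (\<bar>s\<bar> + (- 2 * pi * s^2) + \<beta> * s)"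
      by (simp only: exp_add mult.assoc)
    also have "\<dots> \<le> C * exp ((1 + \<bar>\<beta>\<bar>)^2 + (- (s^2) / 2))"
      using exponent_le_half_gauss[of s \<beta>] C(1) by (intro mult_left_mono) auto
    also have "\<dots> = C * exp ((1 + \<bar>\<beta>\<bar>)^2) * exp (- (s^2) / 2)"
      by (simp only: exp_add mult.assoc)
    finally show "norm (poly_gauss_exp P c s) \<le> C * exp ((1 + \<bar>\<beta>\<bar>)^2) * exp (- (s^2) / 2)" .
  qed
qed

lemma continuous_on_poly_gauss_exp: "continuous_on UNIV (poly_gauss_exp P c)"
  unfolding poly_gauss_exp_def by (intro continuous_intros)

lemma integrable_poly_gauss_exp: "integrable lborel (poly_gauss_exp P c)"
proof -
  obtain C where C: "\<And>s. norm (poly_gauss_exp P c s) \<le> C * exp (- (s^2) / 2)"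
    using norm_poly_gauss_exp_le by blast
  show ?thesis
  proof (rule Bochner_Integration.integrable_bound)
    show "integrable lborel (\<lambda>s. C * exp (- (s^2) / 2))"
      by (intro integrable_mult_right integrable_exp_minus_sq_half)
    show "poly_gauss_exp P c \<in> borel_measurable lborel"
      using continuous_on_poly_gauss_exp by (simp add: borel_measurable_continuous_onI)
    show "AE s in lborel. norm (poly_gauss_exp P c s) \<le> norm (C * exp (- (s^2) / 2))"
      using C by (intro AE_I2) (auto intro: order_trans abs_ge_self)
  qed
qed

lemma poly_gauss_exp_tendsto_0:
  "(poly_gauss_exp P c \<longlongrightarrow> 0) at_top" "(poly_gauss_exp P c \<longlongrightarrow> 0) at_bot"
proof -
  obtain C where C: "\<And>s. norm (poly_gauss_exp P c s) \<le> C * exp (- (s^2) / 2)"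
    using norm_poly_gauss_exp_le by blast
  have "((\<lambda>s::real. C * exp (- (s^2) / 2)) \<longlongrightarrow> 0) at_top"
    by real_asymp
  then show "(poly_gauss_exp P c \<longlongrightarrow> 0) at_top"
    by (rule Lim_null_comparison[rotated]) (use C in auto)
  have "((\<lambda>s::real. C * exp (- (s^2) / 2)) \<longlongrightarrow> 0) at_bot"
    by real_asymp
  then show "(poly_gauss_exp P c \<longlongrightarrow> 0) at_bot"
    by (rule Lim_null_comparison[rotated]) (use C in auto)
qed

lemma has_vector_derivative_poly_gauss_exp:
  "(poly_gauss_exp P c has_vector_derivative
     poly_gauss_exp (pderiv P + [:0, -4*pi:] * P) c s + (2 * of_real pi * c) * poly_gauss_exp P c s) (at s)"
proof -
  have "((\<lambda>x. exp (of_real x * (2 * of_real pi * c))) has_vector_derivative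
      (2 * of_real pi * c) * exp (of_real s * (2 * of_real pi * c))) (at s)"
    by (rule has_vector_derivative_real_field) (auto intro!: derivative_eq_intros)
  from has_vector_derivative_mult[OF has_vector_derivative_of_real[OF has_real_derivative_poly_gauss] this]
  show ?thesis
    unfolding poly_gauss_exp_def by (rule has_vector_derivative_eq_rhs) (simp add: algebra_simps)
qed

text \<open>Integration by parts; the boundary terms vanish by Gaussian decay.\<close>

lemma integral_poly_gauss_exp_step:
  "integral\<^sup>L lborel (poly_gauss_exp (pderiv P + [:0, -4*pi:] * P) c) =
     - (2 * of_real pi * c) * integral\<^sup>L lborel (poly_gauss_exp P c)"
proof -
  let ?P' = "pderiv P + [:0, -4*pi:] * P"
  let ?f = "\<lambda>s. poly_gauss_exp ?P' c s + (2 * of_real pi * c) * poly_gauss_exp P c s"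
  have int: "integrable lborel ?f"
    by (intro Bochner_Integration.integrable_add integrable_mult_right integrable_poly_gauss_exp)
  have "(LBINT x=-\<infinity>..\<infinity>. ?f x) = 0 - 0"
  proof (rule interval_integral_FTC_integrable[where F="poly_gauss_exp P c"])
    show "(poly_gauss_exp P c has_vector_derivative ?f x) (at x)" for x
      by (rule has_vector_derivative_poly_gauss_exp)
    show "isCont ?f x" for x
      using continuous_on_poly_gauss_exp[of ?P' c] continuous_on_poly_gauss_exp[of P c]
      by (intro continuous_intros) (auto simp: continuous_on_eq_continuous_at)
    show "set_integrable lborel (einterval (- \<infinity>) \<infinity>) ?f"
      using int by (simp add: set_integrable_def)
    show "((poly_gauss_exp P c \<circ> real_of_ereal) \<longlongrightarrow> 0) (at_right (- \<infinity>))"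
      "((poly_gauss_exp P c \<circ> real_of_ereal) \<longlongrightarrow> 0) (at_left \<infinity>)"
      using poly_gauss_exp_tendsto_0 by (simp_all add: ereal_tendsto_simps1)
  qed simp
  then have "integral\<^sup>L lborel ?f = 0"
    by (simp add: interval_lebesgue_integral_def set_lebesgue_integral_def)
  then show ?thesis
    by (simp add: integrable_poly_gauss_exp eq_neg_iff_add_eq_0)
qed

lemma integral_poly_gauss_exp_hermite_poly:
  "integral\<^sup>L lborel (poly_gauss_exp (hermite_poly k) c) =
     (- (2 * of_real pi * c))^k * integral\<^sup>L lborel (poly_gauss_exp 1 c)"
  by (induction k) (simp_all only: hermite_poly.simps integral_poly_gauss_exp_step power_Suc
      power_0 mult_1 mult.assoc)

lemma fourier_transform_gauss:
  "(\<integral>u. complex_of_real (exp (- 2 * pi * u^2)) * exp (\<i> * of_real (- 2 * pi * b * u)) \<partial>lborel)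
     = complex_of_real (exp (- pi * b^2 / 2) / sqrt 2)" (is "?I = _")
proof -
  define k where "k = 2 * sqrt pi"
  define t where "t = - sqrt pi * b"
  have "complex_of_real (exp (- pi * b^2 / 2)) = char std_normal_distribution t"
    by (simp add: char_std_normal_distribution t_def power_mult_distrib)
  also have "\<dots> = (\<integral>x. std_normal_density x *\<^sub>R iexp (t * x) \<partial>lborel)"
    unfolding char_def by (subst integral_density) auto
  also have "\<dots> = k *\<^sub>R (\<integral>u. std_normal_density (0 + k * u) *\<^sub>R iexp (t * (0 + k * u)) \<partial>lborel)"
    using lborel_integral_real_affine[of k "\<lambda>x. std_normal_density x *\<^sub>R iexp (t * x)" 0]
    by (simp add: k_def)
  also have "(\<lambda>u. std_normal_density (0 + k * u) *\<^sub>R iexp (t * (0 + k * u))) =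
      (\<lambda>u. complex_of_real (1 / sqrt (2 * pi)) *
        (complex_of_real (exp (- 2 * pi * u^2)) * exp (\<i> * of_real (- 2 * pi * b * u))))"
  proof
    fix u
    have "(k * u)^2 / 2 = 2 * pi * u^2" "t * (k * u) = - 2 * pi * b * u"
      by (simp_all add: k_def t_def power_mult_distrib)
    then show "std_normal_density (0 + k * u) *\<^sub>R iexp (t * (0 + k * u)) =
        complex_of_real (1 / sqrt (2 * pi)) *
          (complex_of_real (exp (- 2 * pi * u^2)) * exp (\<i> * of_real (- 2 * pi * b * u)))"
      by (simp add: std_normal_density_def scaleR_conv_of_real)
  qed
  also have "k *\<^sub>R (\<integral>u. complex_of_real (1 / sqrt (2 * pi)) *
        (complex_of_real (exp (- 2 * pi * u^2)) * exp (\<i> * of_real (- 2 * pi * b * u))) \<partial>lborel) =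
      complex_of_real (k / sqrt (2 * pi)) * ?I"
    by (simp add: scaleR_conv_of_real)
  also have "k / sqrt (2 * pi) = sqrt 2"
    by (simp add: k_def real_sqrt_mult field_simps)
  finally show ?thesis
    by (simp add: field_simps)
qed

lemma norm_integral_gauss_exp:
  "norm (integral\<^sup>L lborel (poly_gauss_exp 1 c)) =
     exp (pi * (Re c)^2 / 2) * exp (- pi * (Im c)^2 / 2) / sqrt 2"
proof -
  define \<alpha> where "\<alpha> = complex_of_real (pi * (Re c)^2 / 2) + \<i> * of_real (pi * Re c * Im c)"
  have shift: "poly_gauss_exp 1 c (Re c / 2 + 1 * u) =
      exp \<alpha> * (complex_of_real (exp (- 2 * pi * u^2)) * exp (\<i> * of_real (- 2 * pi * (- Im c) * u)))"
    for u
  proof -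
    have "poly_gauss_exp 1 c (Re c / 2 + 1 * u) =
        exp (complex_of_real (- 2 * pi * (Re c / 2 + u)^2) + of_real (Re c / 2 + u) * (2 * of_real pi * c))"
      by (simp only: poly_gauss_exp_def poly_1 mult_1_left exp_add exp_of_real)
    also have "\<dots> = exp (\<alpha> + (complex_of_real (- 2 * pi * u^2) + \<i> * of_real (- 2 * pi * (- Im c) * u)))"
      by (rule arg_cong[where f=exp]) (simp add: \<alpha>_def complex_eq_iff power2_eq_square algebra_simps)
    finally show ?thesis
      by (simp only: exp_add exp_of_real)
  qed
  have "integral\<^sup>L lborel (poly_gauss_exp 1 c) = \<bar>1\<bar> *\<^sub>R (\<integral>u. poly_gauss_exp 1 c (Re c / 2 + 1 * u) \<partial>lborel)"
    by (rule lborel_integral_real_affine) simp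
  also have "\<dots> = exp \<alpha> * complex_of_real (exp (- pi * (- Im c)^2 / 2) / sqrt 2)"
    by (simp only: shift integral_mult_right_zero fourier_transform_gauss) simp
  finally show ?thesis
    by (simp add: \<alpha>_def norm_mult norm_divide norm_exp_eq_Re)
qed

section \<open>The STFT of a shifted Gaussian with Hermite window\<close>

definition gauss :: "real \<Rightarrow> complex" where
  "gauss t = complex_of_real (exp (- pi * t^2))"

definition hermite_raw_norm_sq :: "nat \<Rightarrow> real" where
  "hermite_raw_norm_sq n = (\<integral>s. (hermite_raw n s)^2 \<partial>lborel)"

definition gauss_spectrogram :: "nat \<Rightarrow> 'a::real_normed_vector \<Rightarrow> real" where
  "gauss_spectrogram n v = (norm v ^ 2) ^ n * exp (- pi * norm v ^ 2)"

lemma gauss_spectrogram_nonneg: "0 \<le> gauss_spectrogram n v"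
  by (simp add: gauss_spectrogram_def)

lemma hermite_raw_norm_sq_nonneg: "0 \<le> hermite_raw_norm_sq n"
  unfolding hermite_raw_norm_sq_def by (intro integral_nonneg_AE) auto

lemma hermite_fun_eq: "hermite_fun n t = complex_of_real (hermite_raw n t / sqrt (hermite_raw_norm_sq n))"
  unfolding hermite_fun_def hermite_raw_norm_sq_def by simp

lemma tf_shift_gauss_mult_cnj_tf_shift_hermite:
  fixes w \<zeta> :: complex and s :: real
  defines "x \<equiv> Re \<zeta>"
  shows "tf_shift w gauss (x + 1 * s) * cnj (tf_shift \<zeta> (hermite_fun n) (x + 1 * s)) =
    (exp (\<i> * of_real (2 * pi * (Im w - Im \<zeta>) * x)) *
      of_real (exp (- pi * (Re w - x)^2) / sqrt (hermite_raw_norm_sq n))) *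
    poly_gauss_exp (hermite_poly n) (w - \<zeta>) s"
proof -
  let ?p = "poly (hermite_poly n) s" and ?\<sigma> = "sqrt (hermite_raw_norm_sq n)"
  let ?A1 = "2 * of_real pi * \<i> * complex_of_real (Im w * (x + 1 * s))"
  let ?A2 = "complex_of_real (- pi * (x + 1 * s - Re w)^2)"
  let ?A3 = "cnj (2 * of_real pi * \<i> * complex_of_real (Im \<zeta> * (x + 1 * s)))"
  let ?A4 = "complex_of_real (pi * s^2)"
  let ?A5 = "complex_of_real (- 2 * pi * s^2)"
  let ?B1 = "\<i> * of_real (2 * pi * (Im w - Im \<zeta>) * x)"
  let ?B2 = "complex_of_real (- pi * (Re w - x)^2)"
  let ?B3 = "complex_of_real (- 2 * pi * s^2)"
  let ?B4 = "of_real s * (2 * of_real pi * (w - \<zeta>))"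
  have "tf_shift w gauss (x + 1 * s) * cnj (tf_shift \<zeta> (hermite_fun n) (x + 1 * s)) =
      of_real (?p / ?\<sigma>) * exp (?A1 + ?A2 + ?A3 + ?A4 + ?A5)"
    unfolding exp_add exp_of_real
    by (simp add: tf_shift_def gauss_def hermite_fun_eq hermite_raw_eq_poly exp_cnj x_def ac_simps)
  also have "?A1 + ?A2 + ?A3 + ?A4 + ?A5 = ?B1 + ?B2 + ?B3 + ?B4"
    by (simp add: complex_eq_iff power2_eq_square algebra_simps x_def)
  also have "of_real (?p / ?\<sigma>) * exp (?B1 + ?B2 + ?B3 + ?B4) =
      (exp ?B1 * of_real (exp (- pi * (Re w - x)^2) / ?\<sigma>)) * poly_gauss_exp (hermite_poly n) (w - \<zeta>) s"
    unfolding exp_add exp_of_real by (simp add: poly_gauss_exp_def ac_simps)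
  finally show ?thesis .
qed

lemma norm_stft_hermite_gauss:
  fixes w \<zeta> :: complex
  shows "norm (stft (hermite_fun n) (tf_shift w gauss) \<zeta>) =
    (2 * pi)^n * norm (\<zeta> - w)^n * exp (- pi * norm (\<zeta> - w)^2 / 2) / (sqrt (hermite_raw_norm_sq n) * sqrt 2)"
proof -
  let ?K = "exp (\<i> * of_real (2 * pi * (Im w - Im \<zeta>) * Re \<zeta>)) *
    of_real (exp (- pi * (Re w - Re \<zeta>)^2) / sqrt (hermite_raw_norm_sq n))"
  have "stft (hermite_fun n) (tf_shift w gauss) \<zeta> =
      \<bar>1\<bar> *\<^sub>R (\<integral>s. tf_shift w gauss (Re \<zeta> + 1 * s) *
        cnj (tf_shift \<zeta> (hermite_fun n) (Re \<zeta> + 1 * s)) \<partial>lborel)"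
    unfolding stft_def L2_inner_def by (rule lborel_integral_real_affine) simp
  also have "\<dots> = ?K * ((- (2 * of_real pi * (w - \<zeta>)))^n * integral\<^sup>L lborel (poly_gauss_exp 1 (w - \<zeta>)))"
    by (simp only: tf_shift_gauss_mult_cnj_tf_shift_hermite integral_mult_right_zero
        integral_poly_gauss_exp_hermite_poly) simp
  finally have "norm (stft (hermite_fun n) (tf_shift w gauss) \<zeta>) =
      norm ?K * (norm ((- (2 * of_real pi * (w - \<zeta>)))^n) * norm (integral\<^sup>L lborel (poly_gauss_exp 1 (w - \<zeta>))))"
    by (simp only: norm_mult)
  also have "\<dots> = (2 * pi)^n * norm (\<zeta> - w)^n *
      (exp (- pi * (Re w - Re \<zeta>)^2) * exp (pi * (Re (w - \<zeta>))^2 / 2) * exp (- pi * (Im (w - \<zeta>))^2 / 2)) /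
      (sqrt (hermite_raw_norm_sq n) * sqrt 2)"
  proof -
    have "norm ((- (2 * of_real pi * (w - \<zeta>)))^n) = (2 * pi)^n * norm (\<zeta> - w)^n"
      by (simp add: norm_power norm_mult norm_minus_commute power_mult_distrib)
    then show ?thesis
      using hermite_raw_norm_sq_nonneg[of n]
      by (simp add: norm_mult norm_divide norm_integral_gauss_exp mult_ac)
  qed
  also have "exp (- pi * (Re w - Re \<zeta>)^2) * exp (pi * (Re (w - \<zeta>))^2 / 2) * exp (- pi * (Im (w - \<zeta>))^2 / 2) =
      exp (- pi * norm (\<zeta> - w)^2 / 2)"
    unfolding cmod_power2 by (simp add: exp_add[symmetric] power2_commute field_simps)
  finally show ?thesis .
qed

lemma norm_stft_hermite_gauss_sq:
  fixes w \<zeta> :: complex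
  shows "norm (stft (hermite_fun n) (tf_shift w gauss) \<zeta>)^2 =
    (2 * pi)^(2 * n) / (2 * hermite_raw_norm_sq n) * gauss_spectrogram n (\<zeta> - w)"
proof -
  have "exp (- pi * norm (\<zeta> - w)^2 / 2)^2 = exp (- pi * norm (\<zeta> - w)^2)"
    by (simp add: exp_double[symmetric] power2_eq_square[of "exp _"])
  then show ?thesis
    unfolding norm_stft_hermite_gauss gauss_spectrogram_def using hermite_raw_norm_sq_nonneg[of n]
    by (simp add: power_mult_distrib power_divide power_mult[symmetric] mult.commute[of 2 n])
qed

lemma tf_shift_gauss_L2: "tf_shift w gauss \<in> L2"
  and L2_norm_sq_tf_shift_gauss: "L2_norm_sq (tf_shift w gauss) = sqrt (1/2)"
proof -
  have sq: "norm (tf_shift w gauss t)^2 = sqrt (1/2) * normal_density (Re w) (1 / (2 * sqrt pi)) t" for t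
  proof -
    have "normal_density (Re w) (1 / (2 * sqrt pi)) t = 1 / sqrt (1/2) * exp (- 2 * pi * (t - Re w)^2)"
      by (simp add: normal_density_def power_divide power_mult_distrib field_simps)
    moreover have "norm (tf_shift w gauss t)^2 = exp (- 2 * pi * (t - Re w)^2)"
      by (simp add: tf_shift_def gauss_def norm_mult exp_double[symmetric] power2_eq_square[of "exp _"])
    ultimately show ?thesis
      by simp
  qed
  have "continuous_on UNIV (tf_shift w gauss)"
    unfolding tf_shift_def gauss_def by (intro continuous_intros)
  then show "tf_shift w gauss \<in> L2"
    unfolding L2_def mem_Collect_eq sq by (simp add: borel_measurable_continuous_onI)
  show "L2_norm_sq (tf_shift w gauss) = sqrt (1/2)"
    unfolding L2_norm_sq_def sq by simp
qed

section \<open>Covering the plane by five sectors\<close>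

lemma three_quarters_sqrt_le:
  assumes "0 \<le> X" "9/16 * S \<le> X^2" "0 \<le> S"
  shows "3/4 * sqrt S \<le> X"
proof -
  have "3/4 * sqrt S = sqrt (9/16 * S)"
    by (simp add: real_sqrt_mult real_sqrt_divide)
  also have "\<dots> \<le> sqrt (X^2)"
    using assms by (intro real_sqrt_le_mono) auto
  finally show ?thesis
    using assms by simp
qed

lemma cover_upper_half_plane:
  fixes p q :: real
  assumes q: "0 \<le> q"
  shows "3/4 * sqrt (p^2 + q^2) \<le> p \<or> 3/4 * sqrt (p^2 + q^2) \<le> (7*p + 24*q)/25 \<or>
    3/4 * sqrt (p^2 + q^2) \<le> (-4*p + 3*q)/5"
proof -
  consider "4*q \<le> 3*p" | "3*p < 4*q" "-q \<le> 3*p" | "3*p < -q"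
    by linarith
  then show ?thesis
  proof cases
    case 1
    have "0 \<le> 9 * ((3*p - 4*q) * (3*p + 4*q)) + 31 * p^2"
      using 1 q by (intro add_nonneg_nonneg mult_nonneg_nonneg) auto
    also have "\<dots> = 256 * (p^2 - 9/16 * (p^2 + q^2))"
      by (simp add: power2_eq_square algebra_simps)
    finally show ?thesis
      using 1 q three_quarters_sqrt_le[of p "p^2 + q^2"] by simp
  next
    case 2
    have "0 \<le> 600 * ((4*q - 3*p) * (3*p + q)) + 12 * (p - q)^2 + 547 * p^2 + 1179 * q^2"
      using 2 by (simp add: mult_nonneg_nonneg)
    also have "\<dots> = 10000 * (((7*p + 24*q)/25)^2 - 9/16 * (p^2 + q^2))"
      by (simp add: power2_eq_square algebra_simps)
    finally show ?thesis
      using 2 q three_quarters_sqrt_le[of "(7*p + 24*q)/25" "p^2 + q^2"] by simp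
  next
    case 3
    have "0 \<le> 81 * (q * (-3*p - q)) + 31 * p^2 + 141 * (-p * q)"
      using 3 q by (intro add_nonneg_nonneg mult_nonneg_nonneg) auto
    also have "\<dots> = 400 * (((-4*p + 3*q)/5)^2 - 9/16 * (p^2 + q^2))"
      by (simp add: power2_eq_square algebra_simps)
    finally show ?thesis
      using 3 q three_quarters_sqrt_le[of "(-4*p + 3*q)/5" "p^2 + q^2"] by simp
  qed
qed

text \<open>Unit vectors at the angles 0, \<plusminus>73.7 and \<plusminus>143.1 degrees: neighbours are less than
  2 arccos (3/4) \<approx> 82.8 degrees apart.\<close>

definition five_directions :: "complex set" where
  "five_directions =
    {1, Complex (7/25) (24/25), Complex (7/25) (-24/25), Complex (-4/5) (3/5), Complex (-4/5) (-3/5)}"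

lemma norm_five_directions: "e \<in> five_directions \<Longrightarrow> norm e = 1"
  by (auto simp: five_directions_def cmod_def power2_eq_square)

lemma card_five_directions: "card five_directions = 5"
  by (simp add: five_directions_def complex_eq_iff)

lemma five_directions_cover: "\<exists>e\<in>five_directions. 3/4 * norm u \<le> u \<bullet> e"
proof (cases "0 \<le> Im u")
  case True
  then show ?thesis
    using cover_upper_half_plane[OF True, of "Re u"]
    by (auto simp: five_directions_def inner_complex_def cmod_def algebra_simps)
next
  case False
  then show ?thesis
    using cover_upper_half_plane[of "- Im u" "Re u"]
    by (auto simp: five_directions_def inner_complex_def cmod_def algebra_simps)
qed

text \<open>Moving the centre by R/2 towards u lowers the squared distance by at least R^2/2 and
  at most halves the distance.\<close>

lemma gauss_spectrogram_le_shift: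
  fixes u e :: "'a::real_inner"
  assumes R: "0 < R" "R \<le> norm u" and e: "norm e = 1" and angle: "3/4 * norm u \<le> u \<bullet> e"
  shows "gauss_spectrogram n u \<le>
    4^n * exp (- pi * R^2 / 2) * gauss_spectrogram n (u - (R/2) *\<^sub>R e)"
proof -
  define d where "d = (R/2) *\<^sub>R e"
  have "e \<bullet> e = 1"
    using e by (simp flip: power2_norm_eq_inner)
  then have "norm (u - d)^2 = norm u^2 - R * (u \<bullet> e) + R^2/4"
    by (simp add: d_def power2_norm_eq_inner inner_diff_left inner_diff_right inner_commute[of e u]
        power2_eq_square[of R] algebra_simps)
  moreover have "3/4 * (R * norm u) \<le> R * (u \<bullet> e)" "R * R \<le> R * norm u"
    using angle R by (auto intro: mult_left_mono)
  ultimately have closer: "norm (u - d)^2 \<le> norm u^2 - R^2/2"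
    by (simp add: power2_eq_square)
  have "norm u - R/2 \<le> norm (u - d)"
    using norm_triangle_ineq2[of u d] R e by (simp add: d_def)
  then have "(norm u / 2)^2 \<le> norm (u - d)^2"
    using R by (intro power_mono) auto
  then have "(norm u^2)^n \<le> (4 * norm (u - d)^2)^n"
    by (intro power_mono) (auto simp: power_divide)
  moreover have "exp (- pi * norm u^2) \<le> exp (- pi * R^2 / 2) * exp (- pi * norm (u - d)^2)"
  proof -
    have "pi * norm (u - d)^2 \<le> pi * (norm u^2 - R^2/2)"
      using closer by (intro mult_left_mono) auto
    then show ?thesis
      by (simp add: exp_add[symmetric] algebra_simps)
  qed
  ultimately have "(norm u^2)^n * exp (- pi * norm u^2) \<le>
      (4^n * (norm (u - d)^2)^n) * (exp (- pi * R^2 / 2) * exp (- pi * norm (u - d)^2))"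
    by (intro mult_mono) (auto simp: power_mult_distrib)
  then show ?thesis
    unfolding gauss_spectrogram_def d_def[symmetric] by (simp add: mult_ac)
qed

lemma gauss_spectrogram_le_sum_translates:
  fixes z \<zeta> :: complex
  assumes "0 < R" "\<zeta> \<notin> ball z R"
  shows "gauss_spectrogram n (\<zeta> - z) \<le>
    4^n * exp (- pi * R^2 / 2) * (\<Sum>e\<in>five_directions. gauss_spectrogram n (\<zeta> - (z + (R/2) *\<^sub>R e)))"
proof -
  have "R \<le> norm (\<zeta> - z)"
    using assms(2) by (simp add: dist_norm norm_minus_commute)
  obtain e where e: "e \<in> five_directions" "3/4 * norm (\<zeta> - z) \<le> (\<zeta> - z) \<bullet> e"
    using five_directions_cover by blast
  have "gauss_spectrogram n (\<zeta> - z) \<le> 4^n * exp (- pi * R^2 / 2) * gauss_spectrogram n (\<zeta> - (z + (R/2) *\<^sub>R e))"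
    using gauss_spectrogram_le_shift[OF assms(1) \<open>R \<le> _\<close> norm_five_directions[OF e(1)] e(2)] by (simp add: algebra_simps)
  also have "\<dots> \<le> 4^n * exp (- pi * R^2 / 2) * (\<Sum>e\<in>five_directions. gauss_spectrogram n (\<zeta> - (z + (R/2) *\<^sub>R e)))"
    using e(1) by (intro mult_left_mono member_le_sum) (auto simp: five_directions_def gauss_spectrogram_def)
  finally show ?thesis .
qed

section \<open>The sampling argument\<close>

lemma nn_integral_le_by_sum_bound:
  assumes "finite I" and meas: "\<And>i. i \<in> I \<Longrightarrow> g i \<in> borel_measurable M"
    and le: "AE x in M. f x \<le> c * (\<Sum>i\<in>I. g i x)"
    and bound: "\<And>i. i \<in> I \<Longrightarrow> integral\<^sup>N M (g i) \<le> b"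
  shows "integral\<^sup>N M f \<le> c * (of_nat (card I) * b)"
proof -
  have "integral\<^sup>N M f \<le> (\<integral>\<^sup>+ x. c * (\<Sum>i\<in>I. g i x) \<partial>M)"
    using le by (rule nn_integral_mono_AE)
  also have "\<dots> = c * (\<Sum>i\<in>I. integral\<^sup>N M (g i))"
    using meas by (simp add: nn_integral_cmult nn_integral_sum)
  also have "\<dots> \<le> c * (\<Sum>i\<in>I. b)"
    using bound by (intro mult_left_mono sum_mono) auto
  finally show ?thesis
    by simp
qed

lemma le_ln_div_of_le_exp_mult:
  fixes a b x :: real
  assumes "0 < a" "a \<le> exp (- x) * b"
  shows "x \<le> ln (b / a)"
proof -
  have "0 < exp (- x) * b"
    using assms by linarith
  then have "0 < b"
    by (simp add: zero_less_mult_iff)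
  have "exp x * a \<le> exp x * (exp (- x) * b)"
    using assms(2) by (intro mult_left_mono) auto
  also have "\<dots> = b"
    by (simp add: exp_minus_inverse flip: mult.assoc)
  finally have "exp x \<le> b / a"
    using assms(1) by (simp add: pos_le_divide_eq mult.commute)
  then show ?thesis
    using assms(1) \<open>0 < b\<close> by (simp add: ln_ge_iff)
qed

lemma nn_integral_gauss_spectrogram_le_hole:
  fixes \<mu> :: "complex measure" and z :: complex
  assumes borel: "sets \<mu> = sets borel" and R: "0 < R" and hole: "emeasure \<mu> (ball z R) = 0"
    and \<kappa>: "0 \<le> \<kappa>"
    and upper: "\<And>w. (\<integral>\<^sup>+ \<zeta>. ennreal (\<kappa> * gauss_spectrogram n (\<zeta> - w)) \<partial>\<mu>) \<le> b"
  shows "(\<integral>\<^sup>+ \<zeta>. ennreal (\<kappa> * gauss_spectrogram n (\<zeta> - z)) \<partial>\<mu>) \<le>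
    ennreal (4^n * exp (- pi * R^2 / 2)) * (5 * b)"
proof -
  define c where "c = 4^n * exp (- pi * R^2 / 2)"
  define V where "V = (\<lambda>(w::complex) \<zeta>. ennreal (\<kappa> * gauss_spectrogram n (\<zeta> - w)))"
  have meas: "V w \<in> borel_measurable \<mu>" for w
    unfolding measurable_cong_sets[OF borel refl] V_def gauss_spectrogram_def by measurable
  have "AE \<zeta> in \<mu>. \<zeta> \<notin> ball z R"
    using hole borel by (intro AE_not_in) (auto simp: null_sets_def)
  then have "AE \<zeta> in \<mu>. V z \<zeta> \<le> ennreal c * (\<Sum>e\<in>five_directions. V (z + (R/2) *\<^sub>R e) \<zeta>)"
  proof eventually_elim
    case (elim \<zeta>)
    have "\<kappa> * gauss_spectrogram n (\<zeta> - z) \<le>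
        c * (\<Sum>e\<in>five_directions. \<kappa> * gauss_spectrogram n (\<zeta> - (z + (R/2) *\<^sub>R e)))"
      using gauss_spectrogram_le_sum_translates[OF R elim, of n] \<kappa>
      by (simp add: c_def mult_left_mono mult.left_commute flip: sum_distrib_left)
    then have "V z \<zeta> \<le> ennreal (c * (\<Sum>e\<in>five_directions. \<kappa> * gauss_spectrogram n (\<zeta> - (z + (R/2) *\<^sub>R e))))"
      unfolding V_def by (rule ennreal_leI)
    also have "\<dots> = ennreal c * (\<Sum>e\<in>five_directions. V (z + (R/2) *\<^sub>R e) \<zeta>)"
      using \<kappa> unfolding V_def
      by (subst ennreal_mult) (simp_all add: c_def sum_nonneg gauss_spectrogram_nonneg sum_ennreal)
    finally show ?case .
  qed
  then have "integral\<^sup>N \<mu> (V z) \<le> ennreal c * (of_nat (card five_directions) * b)"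
    by (rule nn_integral_le_by_sum_bound[rotated 2]) (use meas upper in \<open>auto simp: V_def five_directions_def\<close>)
  then show ?thesis
    by (simp add: V_def c_def card_five_directions)
qed

theorem theorem2:
  fixes \<mu> :: "complex measure" and n :: nat and A B R :: real and z :: complex
  assumes borel: "sets \<mu> = sets borel"
    and A_pos: "A > 0" and B_pos: "B > 0"
    and sampling: "\<And>f. f \<in> L2 \<Longrightarrow>
        ennreal (A * L2_norm_sq f) \<le> (\<integral>\<^sup>+ w. ennreal ((cmod (stft (hermite_fun n) f w))^2) \<partial>\<mu>)
      \<and> (\<integral>\<^sup>+ w. ennreal ((cmod (stft (hermite_fun n) f w))^2) \<partial>\<mu>) \<le> ennreal (B * L2_norm_sq f)"
    and R_pos: "R > 0"
    and hole: "emeasure \<mu> (ball z R) = 0"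
  shows "R^2 \<le> 2 / pi * ln (4^n * 5 * (B / A))"
proof -
  define N :: real where "N = sqrt (1/2)"
  define \<kappa> where "\<kappa> = (2 * pi)^(2 * n) / (2 * hermite_raw_norm_sq n)"
  have bounds: "ennreal (A * N) \<le> (\<integral>\<^sup>+ \<zeta>. ennreal (\<kappa> * gauss_spectrogram n (\<zeta> - w)) \<partial>\<mu>) \<and>
      (\<integral>\<^sup>+ \<zeta>. ennreal (\<kappa> * gauss_spectrogram n (\<zeta> - w)) \<partial>\<mu>) \<le> ennreal (B * N)" for w
    using sampling[OF tf_shift_gauss_L2[of w]]
    by (simp only: L2_norm_sq_tf_shift_gauss norm_stft_hermite_gauss_sq \<kappa>_def N_def)
  have "ennreal (A * N) \<le> ennreal (4^n * exp (- pi * R^2 / 2)) * (5 * ennreal (B * N))"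
    using bounds nn_integral_gauss_spectrogram_le_hole[OF borel R_pos hole, of \<kappa> n "ennreal (B * N)"]
    by (auto simp: \<kappa>_def hermite_raw_norm_sq_nonneg intro: order_trans)
  also have "\<dots> = ennreal (4^n * exp (- pi * R^2 / 2) * (5 * (B * N)))"
    using B_pos by (simp add: N_def ennreal_mult)
  finally have "A * N \<le> 4^n * exp (- pi * R^2 / 2) * (5 * (B * N))"
    using B_pos by (subst (asm) ennreal_le_iff) (auto simp: N_def)
  then have "A \<le> exp (- (pi * R^2 / 2)) * (4^n * 5 * B)"
    by (simp add: N_def mult_ac)
  from le_ln_div_of_le_exp_mult[OF A_pos this] show ?thesis
    by (simp add: field_simps)
qed

end
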